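(* Let $C_n(a,b)$ be a connected $2$-regular circulant digraph (so $\gcd(n,a,b)=1$) and let $l\ge1$. Then the number of primitive periodic orbits of length $l$ is $$|\mathcal{P}_l(C_n(a,b))|=\frac{n}{l}\sum_{\omega=\lceil la/n\rceil}^{\lfloor lb/n\rfloor}\ \sum_{m\mid\omega}\mu(m)\binom{l/m}{k_\omega/m},$$ where $k_\omega=(\omega n-la)/(b-a)$, $\mu$ is the Möbius function, and $\binom{x}{y}$ is interpreted as $0$ unless both $x$ and $y$ are nonnegative integers.
   Context: Let $n\ge 2$ and $0<a<b<n$ be integers. The directed circulant graph $C_n(a,b)$ has vertex set $\mathbb{Z}_n$ and directed bonds $(v,v+a)$ and $(v,v+b)$ for each $v\in\mathbb{Z}_n$ (addition mod $n$); the bond $(v,v+s)$ has step size $s\in\{a,b\}$. It is (strongly) connected iff $\gcd(n,a,b)=1$. A path of length $l$ is a sequence of bonds $(e_1,\dots,e_l)$ where the terminus of $e_j$ is the origin of $e_{j+1}$. A circuit is a path whose last terminus equals its first origin. A periodic orbit is an equivalence class of circuits under cyclic rotation $\sigma(e_1,\dots,e_l)=(e_2,\dots,e_l,e_1)$. For a circuit $c$, $c^r$ denotes the concatenation of $r$ copies of $c$. A periodic orbit $p$ is primitive if there is no circuit $c_0$ and integer $r>1$ with $p=[c_0^r]$. $\mathcal{P}_l(C_n(a,b))$ denotes the set of primitive periodic orbits of length $l$. *)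

theory Defs
  imports Complex_Main "HOL-Computational_Algebra.Squarefree" "HOL-Computational_Algebra.Primes"
begin

text \<open>Directed circulant graph C_n(a,b): vertices 0..n-1 (representing Z_n),
  a bond is a pair (v, s) with origin v and step size s in {a,b};
  its terminus is (v + s) mod n.\<close>

definition bonds :: "nat \<Rightarrow> nat \<Rightarrow> nat \<Rightarrow> (nat \<times> nat) set" where
  "bonds n a b = {(v, s). v < n \<and> (s = a \<or> s = b)}"

definition origin :: "nat \<times> nat \<Rightarrow> nat" where
  "origin e = fst e"

definition terminus :: "nat \<Rightarrow> nat \<times> nat \<Rightarrow> nat" where
  "terminus n e = (fst e + snd e) mod n"

definition is_path :: "nat \<Rightarrow> nat \<Rightarrow> nat \<Rightarrow> (nat \<times> nat) list \<Rightarrow> bool" where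
  "is_path n a b p \<longleftrightarrow> p \<noteq> [] \<and> set p \<subseteq> bonds n a b \<and>
     (\<forall>j. Suc j < length p \<longrightarrow> terminus n (p ! j) = origin (p ! Suc j))"

definition is_circuit :: "nat \<Rightarrow> nat \<Rightarrow> nat \<Rightarrow> (nat \<times> nat) list \<Rightarrow> bool" where
  "is_circuit n a b c \<longleftrightarrow> is_path n a b c \<and> terminus n (last c) = origin (hd c)"

definition orbit :: "(nat \<times> nat) list \<Rightarrow> (nat \<times> nat) list set" where
  "orbit c = {rotate k c | k. True}"

definition periodic_orbits :: "nat \<Rightarrow> nat \<Rightarrow> nat \<Rightarrow> (nat \<times> nat) list set set" where
  "periodic_orbits n a b = {orbit c | c. is_circuit n a b c}"

definition primitive_orbit :: "nat \<Rightarrow> nat \<Rightarrow> nat \<Rightarrow> (nat \<times> nat) list set \<Rightarrow> bool" where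
  "primitive_orbit n a b p \<longleftrightarrow>
     \<not> (\<exists>c0 r. is_circuit n a b c0 \<and> r > 1 \<and> p = orbit (concat (replicate r c0)))"

definition prim_orbits :: "nat \<Rightarrow> nat \<Rightarrow> nat \<Rightarrow> nat \<Rightarrow> (nat \<times> nat) list set set" where
  "prim_orbits n a b l = {p. \<exists>c. is_circuit n a b c \<and> length c = l \<and> p = orbit c
                              \<and> primitive_orbit n a b p}"

definition moebius :: "nat \<Rightarrow> int" where
  "moebius m = (if m = 0 \<or> \<not> squarefree m then 0 else (-1) ^ card (prime_factors m))"

definition binom_q :: "rat \<Rightarrow> rat \<Rightarrow> rat" where
  "binom_q x y = (if x \<in> \<nat> \<and> y \<in> \<nat>
                   then of_nat (nat \<lfloor>x\<rfloor> choose nat \<lfloor>y\<rfloor>) else 0)"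

end

theory Submission
  imports Defs
begin

text \<open>
  A circuit of length \<open>L\<close> is determined by its starting vertex and by the set \<open>S\<close> of
  positions at which it uses the step \<open>b\<close>; it closes up iff \<open>n\<close> divides the total
  displacement \<open>(L - |S|) a + |S| b = L a + |S| (b - a)\<close>, i.e. iff \<open>|S| = k\<^sub>\<omega>\<close> for
  some integer \<open>\<omega>\<close>, the number of turns around \<open>\<int>\<^sub>n\<close>. Hence there are
  \<open>n \<Sum>\<^sub>\<omega> binom L k\<^sub>\<omega>\<close> circuits of length \<open>L\<close>. A circuit whose rotation period is \<open>d\<close> is
  the \<open>(L/d)\<close>-th power of a circuit of length \<open>d\<close>, so Moebius inversion over the
  divisors of \<open>l\<close> counts the circuits of exact rotation period \<open>l\<close>; these are precisely
  the circuits with a primitive orbit, and each such orbit contains \<open>l\<close> of them.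
  Reindexing \<open>\<omega> = m w\<close> turns the double sum into the one of the theorem.
\<close>

section \<open>The Moebius function\<close>

lemma moebius_prime_mult:
  fixes p e :: nat
  assumes "prime p" "\<not> p dvd e" "e > 0"
  shows "moebius (p * e) = - moebius e"
proof -
  have "coprime p e" using assms by (simp add: prime_imp_coprime)
  then have "squarefree (p * e) \<longleftrightarrow> squarefree e"
    using squarefree_mono[of e "p * e"] squarefree_mult_coprime squarefree_prime[OF assms(1)]
    by auto
  moreover have "prime_factors (p * e) = insert p (prime_factors e)"
    using prime_factors_product[of p e] assms prime_prime_factors[OF assms(1)] by auto
  moreover have "p \<notin> prime_factors e" using assms(2) by auto
  ultimately show ?thesis using assms by (simp add: moebius_def)
qed

lemma moebius_prime_mult_dvd:
  fixes p e :: nat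
  assumes "prime p" "p dvd e"
  shows "moebius (p * e) = 0"
proof -
  have "p\<^sup>2 dvd p * e" using assms by (auto simp: power2_eq_square)
  then have "\<not> squarefree (p * e)"
    using not_squarefreeI[of p "p * e"] assms(1) not_prime_unit[of p] by blast
  then show ?thesis by (simp add: moebius_def)
qed

lemma finite_divisors_pos: "N > 0 \<Longrightarrow> finite {m::nat. m > 0 \<and> m dvd N}"
  by (rule finite_subset[of _ "{..N}"]) (auto dest: dvd_imp_le)

lemma sum_moebius_divisors:
  fixes N :: nat
  assumes "N > 0"
  shows "(\<Sum>m\<in>{m. m > 0 \<and> m dvd N}. moebius m) = (if N = 1 then 1 else 0)"
proof (cases "N = 1")
  case True
  then have "{m. m > 0 \<and> m dvd N} = {1}" by auto
  with True show ?thesis by (simp add: moebius_def)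
next
  case False
  then obtain p where p: "prime p" "p dvd N" using assms prime_factor_nat[of N] by auto
  define D where "D = {m. m > 0 \<and> m dvd N}"
  define E where "E = {e. e > 0 \<and> e dvd N div p}"
  have "N div p > 0" using p assms by (simp add: div_greater_zero_iff dvd_imp_le prime_gt_0_nat)
  then have finE: "finite E" unfolding E_def by (rule finite_divisors_pos)
  have dvd_quot: "e dvd N div p \<longleftrightarrow> p * e dvd N" for e
    using p dvd_div_iff_mult[of p N e] by (auto simp: mult.commute)
  have "sum moebius D = sum moebius ({m\<in>D. \<not> p dvd m} \<union> {m\<in>D. p dvd m})"
    by (rule arg_cong[where f = "sum moebius"]) auto
  also have "\<dots> = sum moebius {m\<in>D. \<not> p dvd m} + sum moebius {m\<in>D. p dvd m}"
    using finite_divisors_pos[OF assms]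
    by (intro sum.union_disjoint) (auto simp: D_def intro: finite_subset[rotated])
  finally have "sum moebius D = sum moebius {m\<in>D. \<not> p dvd m} + sum moebius {m\<in>D. p dvd m}" .
  moreover have "{m\<in>D. p dvd m} = (*) p ` E"
    using p by (auto simp: D_def E_def dvd_quot prime_gt_0_nat elim!: dvdE)
  then have "sum moebius {m\<in>D. p dvd m} = (\<Sum>e\<in>E. moebius (p * e))"
    using p by (simp add: sum.reindex inj_on_def prime_gt_0_nat)
  also have "\<dots> = (\<Sum>e\<in>E. if p dvd e then 0 else - moebius e)"
    by (rule sum.cong) (auto simp: E_def moebius_prime_mult moebius_prime_mult_dvd p)
  also have "\<dots> = - sum moebius {e\<in>E. \<not> p dvd e}"
    using finE by (simp add: sum.If_cases sum_negf) (auto intro!: sum.cong)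
  also have "{e\<in>E. \<not> p dvd e} = {m\<in>D. \<not> p dvd m}"
  proof (intro set_eqI iffI)
    fix m assume "m \<in> {e\<in>E. \<not> p dvd e}"
    then show "m \<in> {m\<in>D. \<not> p dvd m}"
      using p by (auto simp: E_def D_def dvd_quot dest: dvd_mult_right)
  next
    fix m assume m: "m \<in> {m\<in>D. \<not> p dvd m}"
    then have "coprime p m" using p by (auto simp: prime_imp_coprime)
    then have "p * m dvd N" using m p by (auto simp: D_def divides_mult)
    then show "m \<in> {e\<in>E. \<not> p dvd e}" using m by (auto simp: E_def D_def dvd_quot)
  qed
  ultimately show ?thesis using False by (simp add: D_def)
qed

section \<open>The rotation period of a list\<close>

text \<open>The rotation period of the empty list is \<open>1\<close>, so the lemmas below need no
  non-emptiness assumption.\<close>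

definition rotation_period :: "'a list \<Rightarrow> nat" where
  "rotation_period xs = (LEAST j. 0 < j \<and> rotate j xs = xs)"

lemma rotate_inj: "rotate k xs = rotate k ys \<Longrightarrow> xs = ys"
  unfolding rotate_def using inj_fn[OF inj_rotate1, of k] by (auto dest: injD)

lemma rotate_mult_self: "rotate p xs = xs \<Longrightarrow> rotate (k * p) xs = xs"
  by (induction k) (simp_all add: rotate_rotate[symmetric])

lemma rotation_period:
  shows rotation_period_pos: "0 < rotation_period xs"
    and rotate_rotation_period: "rotate (rotation_period xs) xs = xs"
proof -
  have "0 < max 1 (length xs) \<and> rotate (max 1 (length xs)) xs = xs"
    by (cases "xs = []") (simp_all add: max_def)
  then have "\<exists>j. 0 < j \<and> rotate j xs = xs" by blast
  then have "0 < rotation_period xs \<and> rotate (rotation_period xs) xs = xs"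
    unfolding rotation_period_def by (rule LeastI_ex)
  then show "0 < rotation_period xs" "rotate (rotation_period xs) xs = xs" by auto
qed

lemma rotate_mod_rotation_period: "rotate (j mod rotation_period xs) xs = rotate j xs"
proof -
  let ?p = "rotation_period xs"
  have "rotate (j div ?p * ?p) xs = xs" by (rule rotate_mult_self[OF rotate_rotation_period])
  then have "rotate (j mod ?p) xs = rotate (j mod ?p) (rotate (j div ?p * ?p) xs)" by simp
  also have "\<dots> = rotate j xs" by (simp only: rotate_rotate mod_div_mult_eq)
  finally show ?thesis .
qed

lemma rotate_eq_self_iff: "rotate j xs = xs \<longleftrightarrow> rotation_period xs dvd j"
proof
  assume fixed: "rotate j xs = xs"
  show "rotation_period xs dvd j"
  proof (rule ccontr)
    assume "\<not> rotation_period xs dvd j"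
    then have "0 < j mod rotation_period xs" by (simp add: mod_greater_zero_iff_not_dvd)
    moreover have "rotate (j mod rotation_period xs) xs = xs"
      using fixed by (simp add: rotate_mod_rotation_period)
    ultimately have "rotation_period xs \<le> j mod rotation_period xs"
      unfolding rotation_period_def by (blast intro: Least_le)
    then show False using mod_less_divisor[OF rotation_period_pos[of xs], of j] by linarith
  qed
next
  assume "rotation_period xs dvd j"
  then show "rotate j xs = xs"
    using rotate_mult_self[OF rotate_rotation_period] by (auto elim!: dvdE simp: mult.commute)
qed

lemma rotation_period_dvd_length: "rotation_period xs dvd length xs"
  using rotate_eq_self_iff[of "length xs" xs] by simp

lemma nth_mod_rotate_eq_self:
  assumes "rotate p xs = xs" "i < length xs"
  shows "xs ! (i mod p) = xs ! i"
proof -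
  have "i mod p < length xs" using assms(2) by (meson le_less_trans mod_less_eq_dividend)
  have "xs ! (i mod p) = rotate (i div p * p) xs ! (i mod p)"
    using rotate_mult_self[OF assms(1)] by simp
  also have "\<dots> = xs ! ((i div p * p + i mod p) mod length xs)"
    using \<open>i mod p < length xs\<close> by (rule nth_rotate)
  also have "\<dots> = xs ! i"
    using assms(2) by simp
  finally show ?thesis .
qed

lemma length_concat_replicate: "length (concat (replicate q u)) = q * length u"
  by (simp add: length_concat sum_list_replicate)

lemma nth_concat_replicate:
  assumes "i < q * length u"
  shows "concat (replicate q u) ! i = u ! (i mod length u)"
  using assms
proof (induction q arbitrary: i)
  case (Suc q)
  show ?case
  proof (cases "i < length u")
    case False
    then have "concat (replicate (Suc q) u) ! i = concat (replicate q u) ! (i - length u)"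
      by (simp add: nth_append)
    also have "\<dots> = u ! (i mod length u)"
      using Suc False by (simp add: Suc.IH le_mod_geq)
    finally show ?thesis .
  qed (simp add: nth_append)
qed simp

lemma concat_replicate_take_rotation:
  assumes "rotate p xs = xs" "0 < p" "p dvd length xs"
  shows "concat (replicate (length xs div p) (take p xs)) = xs"
proof (rule nth_equalityI)
  have "p \<le> length xs \<or> xs = []" using assms(3) by (auto dest: dvd_imp_le)
  then show len: "length (concat (replicate (length xs div p) (take p xs))) = length xs"
    using assms(3) by (auto simp: length_concat_replicate)
  fix i assume "i < length (concat (replicate (length xs div p) (take p xs)))"
  then show "concat (replicate (length xs div p) (take p xs)) ! i = xs ! i"
    using len assms nth_mod_rotate_eq_self[OF assms(1)]
    by (auto simp: nth_concat_replicate min_def length_concat_replicate)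
qed

lemma rotate_concat_replicate:
  "rotate (length u) (concat (replicate r u)) = concat (replicate r u)"
proof (cases r)
  case (Suc r')
  then have "rotate (length u) (concat (replicate r u)) = concat (replicate r' u @ [u])"
    by (simp add: rotate_append)
  also have "replicate r' u @ [u] = replicate r u" using Suc by (simp add: replicate_append_same)
  finally show ?thesis .
qed simp

lemma orbit_rotate: "orbit (rotate k c) = orbit c"
proof -
  have rotate_back: "rotate j c = rotate (j + (length c - 1) * k) (rotate k c)" for j
  proof -
    have "rotate (j + (length c - 1) * k) (rotate k c) = rotate j (rotate (k * length c) c)"
      by (cases "length c") (simp_all add: rotate_rotate algebra_simps)
    also have "rotate (k * length c) c = c" by (rule rotate_id) simp
    finally show ?thesis by simp
  qed
  show ?thesis
    unfolding orbit_def
  proof (intro equalityI subsetI)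
    fix x assume "x \<in> {rotate j (rotate k c) |j. True}"
    then show "x \<in> {rotate j c |j. True}" by (auto simp: rotate_rotate)
  next
    fix x assume "x \<in> {rotate j c |j. True}"
    then show "x \<in> {rotate j (rotate k c) |j. True}" using rotate_back by blast
  qed
qed

lemma orbit_eq_if_mem:
  assumes "x \<in> orbit c"
  shows "orbit x = orbit c"
proof -
  obtain k where "x = rotate k c" using assms by (auto simp: orbit_def)
  then show ?thesis by (simp add: orbit_rotate)
qed

lemma mem_orbit_self: "c \<in> orbit c"
  unfolding orbit_def by (rule CollectI, rule exI[of _ 0]) simp

lemma card_orbit: "card (orbit xs) = rotation_period xs"
proof -
  let ?p = "rotation_period xs"
  have "orbit xs = (\<lambda>k. rotate k xs) ` {..<?p}"
    unfolding orbit_def using rotate_mod_rotation_period[of _ xs] rotation_period_pos[of xs]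
    by (auto intro!: image_eqI[where x = "_ mod ?p"])
  moreover have "inj_on (\<lambda>k. rotate k xs) {..<?p}"
  proof (rule linorder_inj_onI')
    fix i j assume ij: "i \<in> {..<?p}" "j \<in> {..<?p}" "i < j"
    show "rotate i xs \<noteq> rotate j xs"
    proof
      assume "rotate i xs = rotate j xs"
      then have "rotate i xs = rotate i (rotate (j - i) xs)" using ij by (simp add: rotate_rotate)
      then have "?p dvd j - i" using rotate_eq_self_iff rotate_inj by metis
      then show False using ij by (auto dest: dvd_imp_le)
    qed
  qed
  ultimately show ?thesis by (simp add: card_image)
qed

lemma rotation_period_rotate: "rotation_period (rotate k xs) = rotation_period xs"
proof -
  have "rotate j (rotate k xs) = rotate k xs \<longleftrightarrow> rotate j xs = xs" for j
    by (metis rotate_inj rotate_rotate add.commute)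
  then show ?thesis by (metis rotate_eq_self_iff dvd_antisym dvd_refl)
qed

lemma is_circuit_iff_cyclic:
  "is_circuit n a b c \<longleftrightarrow> c \<noteq> [] \<and> set c \<subseteq> bonds n a b \<and>
     (\<forall>j<length c. terminus n (c ! j) = origin (c ! (Suc j mod length c)))"
proof (cases "c = []")
  case False
  have last_hd: "last c = c ! (length c - 1)" "hd c = c ! 0" "Suc (length c - 1) mod length c = 0"
    using False by (simp_all add: last_conv_nth hd_conv_nth)
  have "(\<forall>j<length c. terminus n (c ! j) = origin (c ! (Suc j mod length c))) \<longleftrightarrow>
      (\<forall>j. Suc j < length c \<longrightarrow> terminus n (c ! j) = origin (c ! Suc j)) \<and>
      terminus n (last c) = origin (hd c)"
  proof (intro iffI conjI allI impI)
    fix j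
    assume "\<forall>j<length c. terminus n (c ! j) = origin (c ! (Suc j mod length c))" "Suc j < length c"
    then show "terminus n (c ! j) = origin (c ! Suc j)" by (metis Suc_lessD mod_less)
  next
    assume "\<forall>j<length c. terminus n (c ! j) = origin (c ! (Suc j mod length c))"
    then show "terminus n (last c) = origin (hd c)" using False last_hd by simp
  next
    fix j
    assume cyc: "(\<forall>j. Suc j < length c \<longrightarrow> terminus n (c ! j) = origin (c ! Suc j)) \<and>
      terminus n (last c) = origin (hd c)" and "j < length c"
    show "terminus n (c ! j) = origin (c ! (Suc j mod length c))"
    proof (cases "Suc j < length c")
      case False
      then have "j = length c - 1" using \<open>j < length c\<close> by simp
      then show ?thesis using cyc last_hd by simp
    qed (use cyc in simp)
  qed
  then show ?thesis using False by (simp add: is_circuit_def is_path_def)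
qed (simp add: is_circuit_def is_path_def)

lemma is_circuit_rotate:
  assumes "is_circuit n a b c"
  shows "is_circuit n a b (rotate k c)"
proof -
  let ?L = "length c"
  have c: "c \<noteq> []" "set c \<subseteq> bonds n a b"
    and cyc: "\<And>j. j < ?L \<Longrightarrow> terminus n (c ! j) = origin (c ! (Suc j mod ?L))"
    using assms unfolding is_circuit_iff_cyclic by auto
  have "terminus n (rotate k c ! j) = origin (rotate k c ! (Suc j mod ?L))" if "j < ?L" for j
  proof -
    have "rotate k c ! (Suc j mod ?L) = c ! ((k + Suc j mod ?L) mod ?L)"
      using c by (simp add: nth_rotate)
    also have "(k + Suc j mod ?L) mod ?L = Suc ((k + j) mod ?L) mod ?L"
      by (simp add: mod_add_right_eq mod_Suc_eq)
    finally show ?thesis using that c cyc[of "(k + j) mod ?L"] by (simp add: nth_rotate)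
  qed
  then show ?thesis using c unfolding is_circuit_iff_cyclic by simp
qed

lemma is_circuit_concat_replicate_iff:
  assumes "0 < q"
  shows "is_circuit n a b (concat (replicate q u)) \<longleftrightarrow> is_circuit n a b u"
proof (cases "u = []")
  case False
  let ?c = "concat (replicate q u)" and ?L = "length u"
  have len: "length ?c = q * ?L" by (rule length_concat_replicate)
  have nth: "?c ! k = u ! (k mod ?L)" if "k < q * ?L" for k
    using that by (rule nth_concat_replicate)
  have "(Suc k mod (q * ?L)) mod ?L = Suc (k mod ?L) mod ?L" for k
    by (simp add: mod_mod_cancel mod_Suc_eq)
  moreover have "0 < q * ?L" using assms False by simp
  ultimately have next_nth: "?c ! (Suc k mod length ?c) = u ! (Suc (k mod ?L) mod ?L)" for k
    using len nth[of "Suc k mod (q * ?L)"] by simp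
  have "?L \<le> q * ?L" using assms by simp
  have "(\<forall>k<length ?c. terminus n (?c ! k) = origin (?c ! (Suc k mod length ?c))) \<longleftrightarrow>
      (\<forall>j<?L. terminus n (u ! j) = origin (u ! (Suc j mod ?L)))"
  proof (intro iffI allI impI)
    fix j assume cyc: "\<forall>k<length ?c. terminus n (?c ! k) = origin (?c ! (Suc k mod length ?c))"
      and "j < ?L"
    then have "j < q * ?L" using \<open>?L \<le> q * ?L\<close> by linarith
    then show "terminus n (u ! j) = origin (u ! (Suc j mod ?L))"
      using cyc[rule_format, of j] len nth[of j] next_nth[of j] \<open>j < ?L\<close> by simp
  next
    fix k assume cyc: "\<forall>j<?L. terminus n (u ! j) = origin (u ! (Suc j mod ?L))"
      and "k < length ?c"
    moreover have "k mod ?L < ?L" using False by simp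
    ultimately show "terminus n (?c ! k) = origin (?c ! (Suc k mod length ?c))"
      using cyc[rule_format, of "k mod ?L"] len nth[of k] next_nth[of k] by simp
  qed
  moreover have "set ?c = set u" using assms by simp
  ultimately show ?thesis using False assms unfolding is_circuit_iff_cyclic by simp
qed (simp add: is_circuit_def is_path_def)

lemma is_circuit_take_rotation:
  assumes "is_circuit n a b c" "rotate p c = c" "0 < p" "p dvd length c"
  shows "is_circuit n a b (take p c)"
proof -
  have "0 < length c div p"
    using assms by (auto simp: is_circuit_def is_path_def dvd_imp_le div_greater_zero_iff)
  moreover have "is_circuit n a b (concat (replicate (length c div p) (take p c)))"
    using assms by (simp add: concat_replicate_take_rotation)
  ultimately show ?thesis by (simp add: is_circuit_concat_replicate_iff)
qed

definition circuits :: "nat \<Rightarrow> nat \<Rightarrow> nat \<Rightarrow> nat \<Rightarrow> (nat \<times> nat) list set" where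
  "circuits n a b L = {c. is_circuit n a b c \<and> length c = L}"

definition primitive_circuits :: "nat \<Rightarrow> nat \<Rightarrow> nat \<Rightarrow> nat \<Rightarrow> (nat \<times> nat) list set" where
  "primitive_circuits n a b L = {c \<in> circuits n a b L. rotation_period c = L}"

lemma finite_circuits: "finite (circuits n a b L)"
proof -
  have "finite (bonds n a b)"
    by (rule finite_subset[of _ "{..<n} \<times> {a, b}"]) (auto simp: bonds_def)
  moreover have "circuits n a b L \<subseteq> {xs. set xs \<subseteq> bonds n a b \<and> length xs = L}"
    unfolding circuits_def is_circuit_iff_cyclic by auto
  ultimately show ?thesis by (blast intro: finite_subset finite_lists_length_eq)
qed

lemma primitive_orbit_iff_rotation_period:
  assumes "is_circuit n a b c"
  shows "primitive_orbit n a b (orbit c) \<longleftrightarrow> rotation_period c = length c"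
proof
  assume prim: "primitive_orbit n a b (orbit c)"
  let ?p = "rotation_period c"
  show "?p = length c"
  proof (rule ccontr)
    assume "?p \<noteq> length c"
    obtain q where q: "length c = ?p * q"
      using rotation_period_dvd_length[of c] by (auto elim: dvdE)
    moreover have "length c \<noteq> 0" using assms by (simp add: is_circuit_def is_path_def)
    ultimately have "1 < q" using \<open>?p \<noteq> length c\<close> by (cases q) auto
    have "length c div ?p = q" using q rotation_period_pos[of c] by simp
    then have "concat (replicate q (take ?p c)) = c"
      using concat_replicate_take_rotation[OF rotate_rotation_period rotation_period_pos
          rotation_period_dvd_length, of c] by simp
    moreover have "is_circuit n a b (take ?p c)"
      using is_circuit_take_rotation[OF assms rotate_rotation_period rotation_period_pos
          rotation_period_dvd_length] .
    ultimately have "\<exists>c0 r. is_circuit n a b c0 \<and> r > 1 \<and> orbit c = orbit (concat (replicate r c0))"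
      using \<open>1 < q\<close> by (intro exI[of _ "take ?p c"] exI[of _ q]) simp
    then show False using prim unfolding primitive_orbit_def by blast
  qed
next
  assume period: "rotation_period c = length c"
  show "primitive_orbit n a b (orbit c)"
    unfolding primitive_orbit_def
  proof
    assume "\<exists>c0 r. is_circuit n a b c0 \<and> r > 1 \<and> orbit c = orbit (concat (replicate r c0))"
    then obtain c0 r where c0: "is_circuit n a b c0" "r > 1"
      and "orbit c = orbit (concat (replicate r c0))" by blast
    then have "c \<in> orbit (concat (replicate r c0))" using mem_orbit_self[of c] by simp
    then obtain k where k: "c = rotate k (concat (replicate r c0))" by (auto simp: orbit_def)
    then have "rotate (length c0) c = rotate k (rotate (length c0) (concat (replicate r c0)))"
      by (simp add: rotate_rotate add.commute)
    also have "\<dots> = c" using k by (simp add: rotate_concat_replicate)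
    finally have "length c dvd length c0" using period by (simp add: rotate_eq_self_iff)
    moreover have "0 < length c0" using c0 by (simp add: is_circuit_def is_path_def)
    ultimately have "length c \<le> length c0" by (simp add: dvd_imp_le)
    moreover have "length c = r * length c0" using k by (simp add: length_concat_replicate)
    ultimately show False using c0 \<open>0 < length c0\<close> by simp
  qed
qed

lemma prim_orbits_eq_image: "prim_orbits n a b l = orbit ` primitive_circuits n a b l"
proof (intro equalityI subsetI)
  fix p assume "p \<in> prim_orbits n a b l"
  then obtain c where c: "is_circuit n a b c" "length c = l" "p = orbit c"
    "primitive_orbit n a b (orbit c)" by (auto simp: prim_orbits_def)
  then have "c \<in> primitive_circuits n a b l"
    using primitive_orbit_iff_rotation_period[OF c(1)] by (simp add: primitive_circuits_def circuits_def)
  then show "p \<in> orbit ` primitive_circuits n a b l" using c(3) by blast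
next
  fix p assume "p \<in> orbit ` primitive_circuits n a b l"
  then obtain c where c: "c \<in> primitive_circuits n a b l" "p = orbit c" by blast
  then have "is_circuit n a b c" "length c = l" "primitive_orbit n a b (orbit c)"
    using primitive_orbit_iff_rotation_period by (auto simp: primitive_circuits_def circuits_def)
  then show "p \<in> prim_orbits n a b l" unfolding prim_orbits_def using c(2) by blast
qed

lemma card_prim_orbits: "l * card (prim_orbits n a b l) = card (primitive_circuits n a b l)"
proof -
  let ?P = "primitive_circuits n a b l"
  have finP: "finite ?P"
    by (rule finite_subset[OF _ finite_circuits[of n a b l]]) (auto simp: primitive_circuits_def)
  have "orbit c \<subseteq> ?P" if c: "c \<in> ?P" for c
  proof
    fix x assume "x \<in> orbit c"
    then obtain k where "x = rotate k c" by (auto simp: orbit_def)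
    then show "x \<in> ?P"
      using c is_circuit_rotate[of n a b c k] rotation_period_rotate[of k c]
      by (auto simp: primitive_circuits_def circuits_def)
  qed
  then have union: "\<Union>(orbit ` ?P) = ?P" using mem_orbit_self by blast
  have "l * card (orbit ` ?P) = card (\<Union>(orbit ` ?P))"
  proof (rule card_partition)
    show "finite (orbit ` ?P)" "finite (\<Union>(orbit ` ?P))" using finP union by simp_all
    show "card x = l" if "x \<in> orbit ` ?P" for x
      using that by (auto simp: card_orbit primitive_circuits_def)
    show "x \<inter> y = {}" if "x \<in> orbit ` ?P" "y \<in> orbit ` ?P" "x \<noteq> y" for x y
      using that orbit_eq_if_mem by blast
  qed
  then show ?thesis using union prim_orbits_eq_image by simp
qed

section \<open>Moebius inversion over rotation periods\<close>

lemma card_circuits_fixed_by_rotation: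
  assumes "m > 0" "l = m * L"
  shows "card {c \<in> circuits n a b l. rotate L c = c} = card (circuits n a b L)"
proof (rule bij_betw_same_card[of "take L"],
    rule bij_betw_byWitness[where f' = "\<lambda>u. concat (replicate m u)"])
  have L_pos: "0 < L" if "c \<in> circuits n a b l" for c
    using that assms(2) by (cases L) (auto simp: circuits_def is_circuit_def is_path_def)
  show "\<forall>c\<in>{c \<in> circuits n a b l. rotate L c = c}. concat (replicate m (take L c)) = c"
  proof
    fix c assume c: "c \<in> {c \<in> circuits n a b l. rotate L c = c}"
    then have "0 < L" "length c = m * L" using L_pos assms(2) by (auto simp: circuits_def)
    then show "concat (replicate m (take L c)) = c"
      using concat_replicate_take_rotation[of L c] c by simp
  qed
  show "\<forall>u\<in>circuits n a b L. take L (concat (replicate m u)) = u"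
    using assms(1) by (auto simp: circuits_def elim!: less_natE)
  show "take L ` {c \<in> circuits n a b l. rotate L c = c} \<subseteq> circuits n a b L"
  proof
    fix u assume "u \<in> take L ` {c \<in> circuits n a b l. rotate L c = c}"
    then obtain c where c: "c \<in> circuits n a b l" "rotate L c = c" "u = take L c" by auto
    then have "is_circuit n a b u"
      using is_circuit_take_rotation[of n a b c L] L_pos[OF c(1)] assms(2)
      by (simp add: circuits_def)
    moreover have "length u = L" using c assms by (simp add: circuits_def)
    ultimately show "u \<in> circuits n a b L" by (simp add: circuits_def)
  qed
  show "(\<lambda>u. concat (replicate m u)) ` circuits n a b L \<subseteq> {c \<in> circuits n a b l. rotate L c = c}"
    using assms rotate_concat_replicate is_circuit_concat_replicate_iff
    by (auto simp: circuits_def length_concat_replicate)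
qed

lemma card_eq_1_moebius:
  fixes q :: "'a \<Rightarrow> nat"
  assumes "finite C" "l > 0" "\<And>c. c \<in> C \<Longrightarrow> q c dvd l"
  shows "int (card {c \<in> C. q c = 1}) =
    (\<Sum>m\<in>{m. m > 0 \<and> m dvd l}. moebius m * int (card {c \<in> C. m dvd q c}))"
proof -
  let ?D = "{m. m > 0 \<and> m dvd l}"
  have finD: "finite ?D" using assms(2) by (rule finite_divisors_pos)
  have "int (card {c \<in> C. q c = 1}) = (\<Sum>c\<in>C. if q c = 1 then 1 else 0)"
    using assms(1) by (simp add: sum.If_cases Int_def)
  also have "\<dots> = (\<Sum>c\<in>C. \<Sum>m\<in>{m. m > 0 \<and> m dvd q c}. moebius m)"
    using assms by (intro sum.cong refl) (simp add: sum_moebius_divisors dvd_pos_nat)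
  also have "\<dots> = (\<Sum>c\<in>C. \<Sum>m\<in>?D. if m dvd q c then moebius m else 0)"
  proof (rule sum.cong[OF refl])
    fix c assume "c \<in> C"
    then have "{m. m > 0 \<and> m dvd q c} = {m\<in>?D. m dvd q c}"
      using assms(3) by (auto intro: dvd_trans)
    with finD show "(\<Sum>m\<in>{m. m > 0 \<and> m dvd q c}. moebius m) = (\<Sum>m\<in>?D. if m dvd q c then moebius m else 0)"
      by (simp only: sum.inter_filter)
  qed
  also have "\<dots> = (\<Sum>m\<in>?D. \<Sum>c\<in>C. if m dvd q c then moebius m else 0)"
    by (rule sum.swap)
  also have "\<dots> = (\<Sum>m\<in>?D. moebius m * int (card {c \<in> C. m dvd q c}))"
    using assms(1) by (simp add: sum.If_cases Int_def mult.commute)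
  finally show ?thesis .
qed

lemma card_primitive_circuits_moebius:
  assumes "l \<ge> 1"
  shows "int (card (primitive_circuits n a b l)) =
    (\<Sum>m\<in>{m. m > 0 \<and> m dvd l}. moebius m * int (card (circuits n a b (l div m))))"
proof -
  let ?C = "circuits n a b l" and ?q = "\<lambda>c. l div rotation_period c"
  have period_dvd: "rotation_period c dvd l" if "c \<in> ?C" for c
    using that rotation_period_dvd_length[of c] by (simp add: circuits_def)
  have "rotation_period c = l \<longleftrightarrow> ?q c = 1" if "c \<in> ?C" for c
    using period_dvd[OF that] rotation_period_pos[of c] by (auto elim!: dvdE)
  then have primitive_eq: "primitive_circuits n a b l = {c \<in> ?C. ?q c = 1}"
    by (auto simp: primitive_circuits_def)
  have "m dvd ?q c \<longleftrightarrow> rotate (l div m) c = c" if "c \<in> ?C" "m dvd l" "m > 0" for c m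
  proof -
    have "m dvd ?q c \<longleftrightarrow> m * rotation_period c dvd l"
      using period_dvd[OF that(1)] rotation_period_pos[of c] by (simp add: dvd_div_iff_mult)
    also have "\<dots> \<longleftrightarrow> rotation_period c dvd l div m"
      using that(2,3) by (simp add: dvd_div_iff_mult mult.commute)
    finally show ?thesis by (simp add: rotate_eq_self_iff)
  qed
  then have fixed: "card {c \<in> ?C. m dvd ?q c} = card (circuits n a b (l div m))"
    if "m dvd l" "m > 0" for m
    using that card_circuits_fixed_by_rotation[of m l "l div m"] by (simp cong: conj_cong)
  have "?q c dvd l" if "c \<in> ?C" for c
    using period_dvd[OF that] by (metis dvd_div_mult_self dvd_triv_left)
  then have "int (card (primitive_circuits n a b l)) =
      (\<Sum>m\<in>{m. m > 0 \<and> m dvd l}. moebius m * int (card {c \<in> ?C. m dvd ?q c}))"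
    unfolding primitive_eq using assms finite_circuits by (intro card_eq_1_moebius) auto
  also have "\<dots> = (\<Sum>m\<in>{m. m > 0 \<and> m dvd l}. moebius m * int (card (circuits n a b (l div m))))"
    by (rule sum.cong) (auto simp: fixed)
  finally show ?thesis .
qed

section \<open>Circuits as a starting vertex and a set of long steps\<close>

definition step :: "nat \<Rightarrow> nat \<Rightarrow> nat set \<Rightarrow> nat \<Rightarrow> nat" where
  "step a b S i = (if i \<in> S then b else a)"

definition circuit_of :: "nat \<Rightarrow> nat \<Rightarrow> nat \<Rightarrow> nat \<Rightarrow> nat \<Rightarrow> nat set \<Rightarrow> (nat \<times> nat) list" where
  "circuit_of n a b L v S = map (\<lambda>j. ((v + (\<Sum>i<j. step a b S i)) mod n, step a b S j)) [0..<L]"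

definition long_steps :: "nat \<Rightarrow> (nat \<times> nat) list \<Rightarrow> nat set" where
  "long_steps b c = {i. i < length c \<and> snd (c ! i) = b}"

definition closing_step_sets :: "nat \<Rightarrow> nat \<Rightarrow> nat \<Rightarrow> nat \<Rightarrow> nat set set" where
  "closing_step_sets n a b L = {S. S \<subseteq> {..<L} \<and> n dvd (L - card S) * a + card S * b}"

lemma sum_step:
  assumes "S \<subseteq> {..<L}"
  shows "(\<Sum>i<L. step a b S i) = (L - card S) * a + card S * b"
proof -
  have "finite S" using assms finite_subset by blast
  then have "card ({..<L} - S) = L - card S" using assms by (simp add: card_Diff_subset)
  moreover have "{..<L} \<inter> S = S" using assms by auto
  ultimately show ?thesis unfolding step_def by (simp add: sum.If_cases Diff_eq)
qed

lemma nth_circuit_of: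
  "j < L \<Longrightarrow> circuit_of n a b L v S ! j = ((v + (\<Sum>i<j. step a b S i)) mod n, step a b S j)"
  by (simp add: circuit_of_def)

lemma origin_hd_less:
  assumes "is_circuit n a b c"
  shows "origin (hd c) < n"
proof -
  have "hd c \<in> bonds n a b" using assms by (auto simp: is_circuit_def is_path_def)
  then show ?thesis by (cases "hd c") (auto simp: bonds_def origin_def)
qed

lemma origin_nth_circuit:
  assumes "is_circuit n a b c" "j < length c"
  shows "origin (c ! j) = (origin (hd c) + (\<Sum>i<j. snd (c ! i))) mod n"
  using assms(2)
proof (induction j)
  case 0
  then show ?case using origin_hd_less[OF assms(1)] by (simp add: hd_conv_nth)
next
  case (Suc j)
  have "origin (c ! Suc j) = (origin (c ! j) + snd (c ! j)) mod n"
    using assms(1) Suc.prems by (auto simp: is_circuit_def is_path_def terminus_def origin_def)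
  then show ?case using Suc by (simp add: mod_add_left_eq add.assoc)
qed

lemma sum_steps_circuit_mod:
  assumes "is_circuit n a b c"
  shows "(origin (hd c) + (\<Sum>i<length c. snd (c ! i))) mod n = origin (hd c)"
proof -
  let ?L = "length c"
  have "c \<noteq> []" using assms by (simp add: is_circuit_def is_path_def)
  then have "terminus n (c ! (?L - 1)) = origin (hd c)" "?L - 1 < ?L" "Suc (?L - 1) = ?L"
    using assms by (auto simp: is_circuit_def last_conv_nth)
  moreover have "(\<Sum>i<?L. snd (c ! i)) = (\<Sum>i<?L - 1. snd (c ! i)) + snd (c ! (?L - 1))"
    using \<open>Suc (?L - 1) = ?L\<close> by (metis sum.lessThan_Suc)
  ultimately show ?thesis
    using origin_nth_circuit[OF assms, of "?L - 1"]
    by (simp add: terminus_def origin_def mod_add_left_eq add.assoc)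
qed

lemma step_long_steps:
  assumes "c \<in> circuits n a b L" "i < L"
  shows "step a b (long_steps b c) i = snd (c ! i)"
proof -
  have "c ! i \<in> bonds n a b" using assms by (auto simp: circuits_def is_circuit_def is_path_def)
  then show ?thesis using assms by (auto simp: bonds_def step_def long_steps_def circuits_def)
qed

lemma circuit_of_long_steps:
  assumes "c \<in> circuits n a b L"
  shows "circuit_of n a b L (origin (hd c)) (long_steps b c) = c"
proof (rule nth_equalityI)
  have c: "is_circuit n a b c" "length c = L" using assms by (auto simp: circuits_def)
  show "length (circuit_of n a b L (origin (hd c)) (long_steps b c)) = length c"
    using c by (simp add: circuit_of_def)
  fix j assume "j < length (circuit_of n a b L (origin (hd c)) (long_steps b c))"
  then have j: "j < L" by (simp add: circuit_of_def)
  then show "circuit_of n a b L (origin (hd c)) (long_steps b c) ! j = c ! j"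
    using origin_nth_circuit[OF c(1), of j] c step_long_steps[OF assms]
    by (simp add: nth_circuit_of origin_def prod_eq_iff)
qed

lemma long_steps_closing:
  assumes "c \<in> circuits n a b L"
  shows "long_steps b c \<in> closing_step_sets n a b L"
proof -
  let ?v = "origin (hd c)" and ?S = "long_steps b c"
  have c: "is_circuit n a b c" "length c = L" using assms by (auto simp: circuits_def)
  have S: "?S \<subseteq> {..<L}" using c by (auto simp: long_steps_def)
  have "(\<Sum>i<L. snd (c ! i)) = (\<Sum>i<L. step a b ?S i)"
    by (rule sum.cong) (simp_all add: step_long_steps[OF assms])
  then have "(\<Sum>i<L. snd (c ! i)) = (L - card ?S) * a + card ?S * b"
    using sum_step[OF S] by simp
  then have "(?v + ((L - card ?S) * a + card ?S * b)) mod n = ?v mod n"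
    using sum_steps_circuit_mod[OF c(1)] origin_hd_less[OF c(1)] c by simp
  then show ?thesis using S by (simp add: closing_step_sets_def mod_eq_dvd_iff_nat)
qed

lemma circuit_of_in_circuits:
  assumes "v < n" "S \<in> closing_step_sets n a b L" "L > 0"
  shows "circuit_of n a b L v S \<in> circuits n a b L"
proof -
  let ?c = "circuit_of n a b L v S"
  have S: "S \<subseteq> {..<L}" and closing: "n dvd (\<Sum>i<L. step a b S i)"
    using assms(2) sum_step by (auto simp: closing_step_sets_def)
  have len: "length ?c = L" by (simp add: circuit_of_def)
  have "set ?c \<subseteq> bonds n a b"
    using assms(1) by (auto simp: circuit_of_def bonds_def step_def)
  moreover have "terminus n (?c ! j) = origin (?c ! (Suc j mod L))" if j: "j < L" for j
  proof -
    have terminus: "terminus n (?c ! j) = (v + (\<Sum>i<Suc j. step a b S i)) mod n"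
      using j by (simp add: nth_circuit_of terminus_def mod_add_left_eq add.assoc)
    show ?thesis
    proof (cases "Suc j < L")
      case False
      then have "Suc j = L" using j by simp
      moreover have "(v + (\<Sum>i<L. step a b S i)) mod n = v"
        using closing assms(1) by (auto elim!: dvdE)
      ultimately show ?thesis using terminus assms by (simp add: nth_circuit_of origin_def)
    qed (use terminus in \<open>simp add: nth_circuit_of origin_def\<close>)
  qed
  ultimately show ?thesis
    using len assms(3) by (auto simp: circuits_def is_circuit_iff_cyclic)
qed

lemma long_steps_circuit_of:
  "a \<noteq> b \<Longrightarrow> S \<subseteq> {..<L} \<Longrightarrow> long_steps b (circuit_of n a b L v S) = S"
  by (auto simp: long_steps_def circuit_of_def step_def split: if_splits)

lemma origin_hd_circuit_of:
  assumes "L > 0" "v < n"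
  shows "origin (hd (circuit_of n a b L v S)) = v"
proof -
  have "hd (circuit_of n a b L v S) = circuit_of n a b L v S ! 0"
    using assms(1) by (intro hd_conv_nth) (simp add: circuit_of_def)
  then show ?thesis using assms by (simp add: nth_circuit_of origin_def)
qed

lemma card_circuits:
  assumes "L > 0" "n > 0" "a \<noteq> b"
  shows "card (circuits n a b L) = n * card (closing_step_sets n a b L)"
proof -
  have "bij_betw (\<lambda>c. (origin (hd c), long_steps b c)) (circuits n a b L)
      ({..<n} \<times> closing_step_sets n a b L)"
  proof (rule bij_betw_byWitness[where f' = "\<lambda>(v, S). circuit_of n a b L v S"])
    show "\<forall>c\<in>circuits n a b L. (\<lambda>(v, S). circuit_of n a b L v S) (origin (hd c), long_steps b c) = c"
      by (simp add: circuit_of_long_steps)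
    show "\<forall>vS\<in>{..<n} \<times> closing_step_sets n a b L.
        (\<lambda>c. (origin (hd c), long_steps b c)) ((\<lambda>(v, S). circuit_of n a b L v S) vS) = vS"
      using assms by (auto simp: closing_step_sets_def long_steps_circuit_of origin_hd_circuit_of)
    show "(\<lambda>c. (origin (hd c), long_steps b c)) ` circuits n a b L \<subseteq> {..<n} \<times> closing_step_sets n a b L"
    proof (rule image_subsetI)
      fix c assume c: "c \<in> circuits n a b L"
      then show "(origin (hd c), long_steps b c) \<in> {..<n} \<times> closing_step_sets n a b L"
        using long_steps_closing[OF c] origin_hd_less[of n a b c] by (simp add: circuits_def)
    qed
    show "(\<lambda>(v, S). circuit_of n a b L v S) ` ({..<n} \<times> closing_step_sets n a b L) \<subseteq> circuits n a b L"
      using circuit_of_in_circuits assms by auto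
  qed
  then show ?thesis by (simp add: bij_betw_same_card card_cartesian_product)
qed

section \<open>Counting closing step sets by winding number\<close>

definition winding_range :: "nat \<Rightarrow> nat \<Rightarrow> nat \<Rightarrow> nat \<Rightarrow> int set" where
  "winding_range n a b L = {\<lceil>of_nat (L * a) / (of_nat n :: rat)\<rceil> .. \<lfloor>of_nat (L * b) / (of_nat n :: rat)\<rfloor>}"

text \<open>\<open>long_step_count n a b L \<omega>\<close> is the paper's \<open>k\<^sub>\<omega>\<close>: the number of \<open>b\<close>-steps of a
  circuit of length \<open>L\<close> that winds \<open>\<omega>\<close> times around \<open>\<int>\<^sub>n\<close>.\<close>

definition long_step_count :: "nat \<Rightarrow> nat \<Rightarrow> nat \<Rightarrow> nat \<Rightarrow> int \<Rightarrow> rat" where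
  "long_step_count n a b L \<omega> = (of_int \<omega> * of_nat n - of_nat L * of_nat a) / (of_nat b - of_nat a)"

lemma mem_winding_range_iff:
  assumes "n > 0"
  shows "\<omega> \<in> winding_range n a b L \<longleftrightarrow> int (L * a) \<le> \<omega> * int n \<and> \<omega> * int n \<le> int (L * b)"
proof -
  have "\<omega> \<in> winding_range n a b L \<longleftrightarrow>
      of_nat (L * a) \<le> of_int \<omega> * (of_nat n :: rat) \<and> of_int \<omega> * (of_nat n :: rat) \<le> of_nat (L * b)"
    using assms by (simp add: winding_range_def ceiling_le_iff le_floor_iff pos_divide_le_eq
        pos_le_divide_eq del: of_nat_mult)
  also have "\<dots> \<longleftrightarrow> int (L * a) \<le> \<omega> * int n \<and> \<omega> * int n \<le> int (L * b)"
    by (metis (no_types) of_int_le_iff of_int_mult of_int_of_nat_eq)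
  finally show ?thesis .
qed

lemma long_step_count_eq_iff:
  assumes "a < b" "J \<le> L"
  shows "of_nat J = long_step_count n a b L \<omega> \<longleftrightarrow> \<omega> * int n = int ((L - J) * a + J * b)"
proof -
  have "of_nat J = long_step_count n a b L \<omega> \<longleftrightarrow>
      of_int \<omega> * of_nat n = (of_nat L * of_nat a + of_nat J * (of_nat b - of_nat a) :: rat)"
    using assms by (auto simp: long_step_count_def field_simps)
  also have "\<dots> \<longleftrightarrow> of_int \<omega> * of_nat n = (of_nat ((L - J) * a + J * b) :: rat)"
    using assms by (simp add: of_nat_diff) (simp add: algebra_simps)
  also have "\<dots> \<longleftrightarrow> (of_int (\<omega> * int n) :: rat) = of_int (int ((L - J) * a + J * b))"
    by simp
  also have "\<dots> \<longleftrightarrow> \<omega> * int n = int ((L - J) * a + J * b)"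
    by (rule of_int_eq_iff)
  finally show ?thesis .
qed

lemma displacement_bounds:
  fixes J L a b :: nat
  assumes "a \<le> b" "J \<le> L"
  shows "L * a \<le> (L - J) * a + J * b" "(L - J) * a + J * b \<le> L * b"
proof -
  have "L * a = (L - J) * a + J * a" "L * b = (L - J) * b + J * b"
    using assms(2) by (simp_all add: add_mult_distrib[symmetric])
  then show "L * a \<le> (L - J) * a + J * b" "(L - J) * a + J * b \<le> L * b"
    using assms(1) by simp_all
qed

lemma binom_q_eq_card_subsets:
  "binom_q (of_nat L) y = of_nat (card {S. S \<subseteq> {..<L} \<and> of_nat (card S) = y})"
proof (cases "y \<in> \<nat>")
  case True
  then obtain J where "y = of_nat J" by (auto elim: Nats_cases)
  then show ?thesis using n_subsets[of "{..<L}" J] by (simp add: binom_q_def)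
next
  case False
  then have "{S. S \<subseteq> {..<L} \<and> of_nat (card S) = y} = {}" by (auto simp: of_nat_in_Nats)
  then show ?thesis using False by (simp add: binom_q_def)
qed

lemma sum_binom_q_winding_range:
  assumes "n > 0" "a < b"
  shows "(\<Sum>\<omega>\<in>winding_range n a b L. binom_q (of_nat L) (long_step_count n a b L \<omega>)) =
    of_nat (card (closing_step_sets n a b L))"
proof -
  define A where "A \<omega> = {S. S \<subseteq> {..<L} \<and> of_nat (card S) = long_step_count n a b L \<omega>}" for \<omega>
  have card_le: "card S \<le> L" if "S \<subseteq> {..<L}" for S
    using that card_mono[of "{..<L}" S] by simp
  have A_iff: "S \<in> A \<omega> \<longleftrightarrow> S \<subseteq> {..<L} \<and> \<omega> * int n = int ((L - card S) * a + card S * b)" for S \<omega>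
    using long_step_count_eq_iff[OF assms(2) card_le] by (auto simp: A_def)
  have "(\<Union>\<omega>\<in>winding_range n a b L. A \<omega>) = closing_step_sets n a b L"
  proof (intro set_eqI iffI)
    fix S assume "S \<in> (\<Union>\<omega>\<in>winding_range n a b L. A \<omega>)"
    then obtain \<omega> where "S \<subseteq> {..<L}" "\<omega> * int n = int ((L - card S) * a + card S * b)"
      by (auto simp: A_iff)
    moreover from this(2) have "int n dvd int ((L - card S) * a + card S * b)"
      by (metis dvd_triv_right)
    then have "n dvd (L - card S) * a + card S * b" by (simp only: int_dvd_int_iff)
    ultimately show "S \<in> closing_step_sets n a b L"
      by (simp add: closing_step_sets_def)
  next
    fix S assume S: "S \<in> closing_step_sets n a b L"
    define D where "D = (L - card S) * a + card S * b"
    then have "S \<subseteq> {..<L}" "n dvd D" using S by (auto simp: closing_step_sets_def)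
    then have "D div n * n = D" "L * a \<le> D" "D \<le> L * b"
      using displacement_bounds[of a b "card S" L] assms card_le by (auto simp: D_def)
    then have "int (D div n) * int n = int D" "int (L * a) \<le> int D" "int D \<le> int (L * b)"
      by (metis of_nat_mult, simp_all only: of_nat_le_iff)
    then have "int (D div n) \<in> winding_range n a b L" "S \<in> A (int (D div n))"
      using assms(1) \<open>S \<subseteq> {..<L}\<close> by (simp_all only: mem_winding_range_iff A_iff D_def)
    then show "S \<in> (\<Union>\<omega>\<in>winding_range n a b L. A \<omega>)" by blast
  qed
  moreover have "A \<omega>1 \<inter> A \<omega>2 = {}" if "\<omega>1 \<noteq> \<omega>2" for \<omega>1 \<omega>2
  proof -
    have False if "S \<in> A \<omega>1" "S \<in> A \<omega>2" for S
    proof -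
      from that have "\<omega>1 * int n = \<omega>2 * int n" by (simp add: A_iff)
      then show False using \<open>\<omega>1 \<noteq> \<omega>2\<close> assms(1) by simp
    qed
    then show ?thesis by blast
  qed
  then have "card (\<Union>\<omega>\<in>winding_range n a b L. A \<omega>) = (\<Sum>\<omega>\<in>winding_range n a b L. card (A \<omega>))"
    by (intro card_UN_disjoint) (auto simp: winding_range_def A_def)
  ultimately show ?thesis by (simp add: binom_q_eq_card_subsets A_def)
qed

lemma winding_range_multiples:
  assumes "n > 0" "m > 0" "l = m * L"
  shows "{\<omega> \<in> winding_range n a b l. int m dvd \<omega>} = (\<lambda>w. int m * w) ` winding_range n a b L"
proof -
  have "int m * w \<in> winding_range n a b l \<longleftrightarrow> w \<in> winding_range n a b L" for w
    using assms by (simp add: mem_winding_range_iff mult.assoc mult_le_cancel_left_pos)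
  then show ?thesis by (auto elim!: dvdE)
qed

lemma winding_range_pos:
  assumes "n > 0" "a > 0" "l > 0" "\<omega> \<in> winding_range n a b l"
  shows "\<omega> > 0"
proof -
  have "0 < int (l * a)" using assms by simp
  moreover have "int (l * a) \<le> \<omega> * int n" using assms(1,4) mem_winding_range_iff by blast
  ultimately have "0 < \<omega> * int n" by linarith
  then show ?thesis using assms(1) by (simp add: zero_less_mult_iff)
qed

lemma binom_q_not_dvd:
  assumes "m > 0" "\<not> m dvd l"
  shows "binom_q (of_nat l / of_nat m) y = 0"
proof -
  have "(of_nat l / of_nat m :: rat) \<notin> \<nat>"
  proof
    assume "(of_nat l / of_nat m :: rat) \<in> \<nat>"
    then obtain q where "(of_nat l / of_nat m :: rat) = of_nat q" by (auto elim: Nats_cases)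
    then have "l = q * m" using assms(1) by (simp add: divide_simps flip: of_nat_mult)
    then show False using assms(2) by simp
  qed
  then show ?thesis by (simp add: binom_q_def)
qed

lemma sum_winding_multiples:
  assumes "n > 0" "a < b" "m > 0" "m dvd l"
  shows "(\<Sum>\<omega>\<in>{\<omega> \<in> winding_range n a b l. int m dvd \<omega>}.
      binom_q (of_nat l / of_nat m) (long_step_count n a b l \<omega> / of_nat m)) =
    of_nat (card (closing_step_sets n a b (l div m)))"
proof -
  define L where "L = l div m"
  have l_eq: "l = m * L" using assms by (simp add: L_def)
  have "long_step_count n a b l (int m * w) / of_nat m = long_step_count n a b L w" for w
    using assms(3) by (simp add: long_step_count_def l_eq divide_simps algebra_simps)
  moreover have "(of_nat l / of_nat m :: rat) = of_nat L" using assms(3) by (simp add: l_eq)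
  ultimately show ?thesis
    using assms sum_binom_q_winding_range[OF assms(1,2), of L]
    by (simp add: winding_range_multiples[OF assms(1,3) l_eq] sum.reindex inj_on_def L_def)
qed

lemma sum_winding_divisors:
  assumes "n > 0" "0 < a" "a < b" "l > 0"
  shows "(\<Sum>\<omega>\<in>winding_range n a b l. \<Sum>m\<in>{m::nat. m > 0 \<and> int m dvd \<omega>}.
      of_int (moebius m) * binom_q (of_nat l / of_nat m) (long_step_count n a b l \<omega> / of_nat m)) =
    (\<Sum>m\<in>{m. m > 0 \<and> m dvd l}. of_int (moebius m) * of_nat (card (closing_step_sets n a b (l div m))))"
proof -
  let ?I = "winding_range n a b l" and ?D = "{m. m > 0 \<and> m dvd l}"
    and ?M = "\<lambda>\<omega>. {m::nat. m > 0 \<and> int m dvd \<omega>}"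
    and ?g = "\<lambda>\<omega> m. of_int (moebius m) * binom_q (of_nat l / of_nat m) (long_step_count n a b l \<omega> / of_nat m)"
  have "(\<Sum>m\<in>?M \<omega>. ?g \<omega> m) = (\<Sum>m\<in>?D. if int m dvd \<omega> then ?g \<omega> m else 0)"
    if "\<omega> \<in> ?I" for \<omega>
  proof -
    have "0 < \<omega>" using assms(1,2,4) that by (rule winding_range_pos)
    then have "?M \<omega> \<subseteq> {..nat \<omega>}" by (auto dest: zdvd_imp_le)
    then have fin: "finite (?M \<omega>)" by (rule finite_subset) simp
    have sub: "{m\<in>?D. int m dvd \<omega>} \<subseteq> ?M \<omega>" by blast
    have zero: "?g \<omega> m = 0" if "m \<in> ?M \<omega> - {m\<in>?D. int m dvd \<omega>}" for m
    proof -
      have "m > 0" "\<not> m dvd l" using that by auto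
      then show ?thesis by (simp add: binom_q_not_dvd)
    qed
    have "(\<Sum>m\<in>?M \<omega>. ?g \<omega> m) = (\<Sum>m\<in>{m\<in>?D. int m dvd \<omega>}. ?g \<omega> m)"
      by (rule sum.mono_neutral_right[OF fin sub]) (use zero in blast)
    also have "\<dots> = (\<Sum>m\<in>?D. if int m dvd \<omega> then ?g \<omega> m else 0)"
      using finite_divisors_pos[OF assms(4)] by (simp only: sum.inter_filter)
    finally show ?thesis .
  qed
  then have "(\<Sum>\<omega>\<in>?I. \<Sum>m\<in>?M \<omega>. ?g \<omega> m) = (\<Sum>\<omega>\<in>?I. \<Sum>m\<in>?D. if int m dvd \<omega> then ?g \<omega> m else 0)"
    by (rule sum.cong[OF refl])
  also have "\<dots> = (\<Sum>m\<in>?D. \<Sum>\<omega>\<in>?I. if int m dvd \<omega> then ?g \<omega> m else 0)"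
    by (rule sum.swap)
  also have "\<dots> = (\<Sum>m\<in>?D. of_int (moebius m) * of_nat (card (closing_step_sets n a b (l div m))))"
  proof (rule sum.cong[OF refl])
    fix m assume "m \<in> ?D"
    have "(\<Sum>\<omega>\<in>?I. if int m dvd \<omega> then ?g \<omega> m else 0) = (\<Sum>\<omega>\<in>{\<omega>\<in>?I. int m dvd \<omega>}. ?g \<omega> m)"
      using finite_atLeastAtMost_int by (simp only: winding_range_def sum.inter_filter)
    also have "\<dots> = of_int (moebius m) * (\<Sum>\<omega>\<in>{\<omega>\<in>?I. int m dvd \<omega>}.
        binom_q (of_nat l / of_nat m) (long_step_count n a b l \<omega> / of_nat m))"
      by (rule sum_distrib_left[symmetric])
    finally show "(\<Sum>\<omega>\<in>?I. if int m dvd \<omega> then ?g \<omega> m else 0) =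
        of_int (moebius m) * of_nat (card (closing_step_sets n a b (l div m)))"
      using \<open>m \<in> ?D\<close> assms by (simp add: sum_winding_multiples)
  qed
  finally show ?thesis .
qed

theorem theorem2:
  fixes n a b l :: nat
  assumes "n \<ge> 2" and "0 < a" and "a < b" and "b < n"
    and "gcd n (gcd a b) = 1"
    and "l \<ge> 1"
  shows "of_nat (card (prim_orbits n a b l)) =
    of_nat n / of_nat l *
      (\<Sum>\<omega>\<in>{\<lceil>of_nat (l * a) / (of_nat n :: rat)\<rceil> .. \<lfloor>of_nat (l * b) / (of_nat n :: rat)\<rfloor>}.
         \<Sum>m\<in>{m::nat. m > 0 \<and> int m dvd \<omega>}.
           of_int (moebius m) *
           binom_q (of_nat l / of_nat m)
             (((of_int \<omega> * of_nat n - of_nat l * of_nat a) / (of_nat b - of_nat a)) / of_nat m))"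
proof -
  let ?D = "{m. m > 0 \<and> m dvd l}"
  let ?W = "\<Sum>\<omega>\<in>winding_range n a b l. \<Sum>m\<in>{m::nat. m > 0 \<and> int m dvd \<omega>}.
      of_int (moebius m) * binom_q (of_nat l / of_nat m) (long_step_count n a b l \<omega> / of_nat m)"
  have card_circuits_quot: "card (circuits n a b (l div m)) = n * card (closing_step_sets n a b (l div m))"
    if "m \<in> ?D" for m
    using that assms by (intro card_circuits) (auto simp: div_greater_zero_iff dvd_imp_le)
  have "of_nat l * of_nat (card (prim_orbits n a b l)) = (of_nat (l * card (prim_orbits n a b l)) :: rat)"
    by simp
  also have "\<dots> = of_int (int (card (primitive_circuits n a b l)))"
    by (simp only: card_prim_orbits of_int_of_nat_eq)
  also have "\<dots> = of_int (\<Sum>m\<in>?D. moebius m * int (card (circuits n a b (l div m))))"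
    by (simp only: card_primitive_circuits_moebius[OF assms(6)])
  also have "\<dots> = (\<Sum>m\<in>?D. of_nat n * (of_int (moebius m) * of_nat (card (closing_step_sets n a b (l div m)))))"
    by (simp, intro sum.cong refl) (simp add: card_circuits_quot mult.left_commute)
  also have "\<dots> = of_nat n * ?W"
    using sum_winding_divisors[of n a b l] assms by (simp add: sum_distrib_left)
  finally have "of_nat l * of_nat (card (prim_orbits n a b l)) = of_nat n * ?W" .
  moreover have "x = y / z * w" if "z * x = y * w" "z \<noteq> 0" for x y z w :: rat
    using that by (simp add: field_simps)
  ultimately have "of_nat (card (prim_orbits n a b l)) = of_nat n / of_nat l * ?W"
    using assms(6) by simp
  then show ?thesis unfolding winding_range_def long_step_count_def .
qed

end
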